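(* Let $N\ge2$ be an integer, $R>0$, and let $f$ satisfy (A1) and (A3) with $\delta=0$. Let $k\in\mathbb{N}$, $\nu\in\{+,-\}$ and $\hat\lambda\in(0,\infty)$ be given. Then there exists $\hat b>0$ such that for every $n\in\mathbb{N}$ with $1/n<R$ and every solution $u\in S^\nu_{k,0}$ of problem $(4.6)_n$ with $\lambda=\hat\lambda$, one has $\|u\|_{C[0,R]}\ge\hat b$; here $\hat b$ is independent of $n$ and $u$.
   Context: $\phi_1(s)=s/\sqrt{1-s^2}$ for $s\in(-1,1)$. (A1) $f:[0,R]\times(-\alpha,\alpha)\to\mathbb{R}$ is continuous, $R<\alpha\le\infty$, and $f(r,s)s>0$ for $r\in[0,R]$, $s\in(-\alpha,0)\cup(0,\alpha)$. (A3) with $\delta=0$: $f(r,0)\equiv0$ and $\lim_{s\to0}f(r,s)/\phi_1(s)=\infty$ uniformly in $r\in[0,R]$. For $n\in\mathbb{N}$ define $g_n(r,s)=0$ for $r\in[0,1/n]$, $s\in(-\alpha,\alpha)$, and $g_n(r,s)=f(r-1/n,s)$ for $r\in(1/n,R]$, $s\in(-\alpha,\alpha)$. Problem $(4.6)_n$: $-(r^{N-1}\phi_1(u'))'=\lambda r^{N-1}g_n(r,u)$ on $(0,R)$, $u'(0)=0=u(R)$, where a solution is $u\in C^1[0,R]$ with $|u'|<1$ on $[0,R]$ satisfying the equation (equivalently, $r^{N-1}\phi_1(u'(r))=-\lambda\int_0^r t^{N-1}g_n(t,u(t))\,dt$ on $[0,R]$) and the boundary conditions. $E_0=\{u\in C^1[0,R]:u'(0)=u(R)=0\}$;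 $S^+_{k,0}$ is the set of $u\in E_0$ with exactly $k-1$ zeros in $(0,R)$, all simple, and positive on $(0,\sigma)$ for some $\sigma>0$; $S^-_{k,0}=-S^+_{k,0}$. *)

theory Defs
  imports "HOL-Analysis.Analysis"
begin

definition phi1 :: "real \<Rightarrow> real" where
  "phi1 s = s / sqrt (1 - s\<^sup>2)"

definition A1 :: "real \<Rightarrow> ereal \<Rightarrow> (real \<Rightarrow> real \<Rightarrow> real) \<Rightarrow> bool" where
  "A1 R alpha f \<longleftrightarrow>
     ereal R < alpha \<and>
     continuous_on ({0..R} \<times> {s. ereal \<bar>s\<bar> < alpha}) (\<lambda>(r, s). f r s) \<and>
     (\<forall>r\<in>{0..R}. \<forall>s. ereal \<bar>s\<bar> < alpha \<and> s \<noteq> 0 \<longrightarrow> f r s * s > 0)"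

definition A3_0 :: "real \<Rightarrow> (real \<Rightarrow> real \<Rightarrow> real) \<Rightarrow> bool" where
  "A3_0 R f \<longleftrightarrow>
     (\<forall>r\<in>{0..R}. f r 0 = 0) \<and>
     (\<forall>M. \<exists>e>0. \<forall>r\<in>{0..R}. \<forall>s. 0 < \<bar>s\<bar> \<and> \<bar>s\<bar> < e \<longrightarrow> f r s / phi1 s \<ge> M)"

definition gn :: "(real \<Rightarrow> real \<Rightarrow> real) \<Rightarrow> nat \<Rightarrow> real \<Rightarrow> real \<Rightarrow> real" where
  "gn f n r s = (if r \<le> 1 / real n then 0 else f (r - 1 / real n) s)"

definition C1_with :: "real \<Rightarrow> (real \<Rightarrow> real) \<Rightarrow> (real \<Rightarrow> real) \<Rightarrow> bool" where
  "C1_with R u u' \<longleftrightarrow>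
     (\<forall>x\<in>{0..R}. (u has_real_derivative u' x) (at x within {0..R})) \<and>
     continuous_on {0..R} u'"

definition E0 :: "real \<Rightarrow> (real \<Rightarrow> real) \<Rightarrow> (real \<Rightarrow> real) \<Rightarrow> bool" where
  "E0 R u u' \<longleftrightarrow> C1_with R u u' \<and> u' 0 = 0 \<and> u R = 0"

definition S_plus :: "real \<Rightarrow> nat \<Rightarrow> (real \<Rightarrow> real) \<Rightarrow> (real \<Rightarrow> real) \<Rightarrow> bool" where
  "S_plus R k u u' \<longleftrightarrow>
     E0 R u u' \<and>
     finite {x\<in>{0<..<R}. u x = 0} \<and>
     card {x\<in>{0<..<R}. u x = 0} = k - 1 \<and>
     (\<forall>x\<in>{0<..<R}. u x = 0 \<longrightarrow> u' x \<noteq> 0) \<and>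
     (\<exists>\<sigma>>0. \<forall>x\<in>{0<..<\<sigma>}. u x > 0)"

text \<open>u in S^nu_{k,0} for nu = 1 (i.e. +) or nu = -1 (i.e. -); S^- = - S^+.\<close>
definition S_nu :: "real \<Rightarrow> nat \<Rightarrow> real \<Rightarrow> (real \<Rightarrow> real) \<Rightarrow> (real \<Rightarrow> real) \<Rightarrow> bool" where
  "S_nu R k nu u u' \<longleftrightarrow> S_plus R k (\<lambda>x. nu * u x) (\<lambda>x. nu * u' x)"

definition sol46 :: "nat \<Rightarrow> real \<Rightarrow> (real \<Rightarrow> real \<Rightarrow> real) \<Rightarrow> nat \<Rightarrow> real
                      \<Rightarrow> (real \<Rightarrow> real) \<Rightarrow> (real \<Rightarrow> real) \<Rightarrow> bool" where
  "sol46 N R f n lam u u' \<longleftrightarrow>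
     C1_with R u u' \<and>
     (\<forall>r\<in>{0..R}. \<bar>u' r\<bar> < 1) \<and>
     (\<forall>r\<in>{0..R}. r ^ (N - 1) * phi1 (u' r) =
          - lam * integral {0..r} (\<lambda>t. t ^ (N - 1) * gn f n t (u t))) \<and>
     u' 0 = 0 \<and> u R = 0"

end

theory Submission
  imports Defs
begin

text \<open>
  Choose a0 < R beyond every shift 1/n < R. A solution in S_nu has k - 1 zeros in (0, R), so
  one of k equal subintervals of [a0, R] contains none, and on its middle half u has a constant
  sign. There the equation makes the flux r^(N-1) phi1(u') decrease at least at rate
  lam a0^(N-1) M |u|, and by (A3) the constant M can be taken as large as we like once |u| is small.
  At the midpoint the flux is either nonpositive, and then u falls steeply on the right half, or
  nonnegative, and then (reflecting) u rises steeply on the left half; for |u| small enough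
  either way forces u through zero inside the zero-free interval.
\<close>

lemma derivative_le_imp_diff_le:
  fixes u u' :: "real \<Rightarrow> real"
  assumes "x \<le> y" "{x..y} \<subseteq> {a..b}"
    and "\<forall>r\<in>{a..b}. (u has_real_derivative u' r) (at r within {a..b})"
    and "\<forall>r\<in>{x..y}. u' r \<le> d"
  shows "u y - u x \<le> d * (y - x)"
proof -
  have "\<exists>z\<in>{x..y}. u y - u x = (\<lambda>h. u' z * h) (y - x)"
  proof (rule mvt_very_simple[OF \<open>x \<le> y\<close>])
    fix z assume "x \<le> z" "z \<le> y"
    then have "(u has_real_derivative u' z) (at z within {a..b})"
      using assms(2,3) by auto
    then have "(u has_real_derivative u' z) (at z within {x..y})"
      using assms(2) by (rule DERIV_subset)
    then show "(u has_derivative (\<lambda>h. u' z * h)) (at z within {x..y})"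
      by (simp add: has_field_derivative_def)
  qed
  then obtain z where "z \<in> {x..y}" "u y - u x = u' z * (y - x)"
    by auto
  then show ?thesis
    using assms(1,4) by (simp add: mult_right_mono)
qed

lemma has_real_derivative_on_subinterval:
  "\<forall>r\<in>{a..b}. (u has_real_derivative u' r) (at r within {a..b}) \<Longrightarrow> a \<le> x \<Longrightarrow> y \<le> b \<Longrightarrow>
    \<forall>r\<in>{x..y}. (u has_real_derivative u' r) (at r within {x..y})"
  by (metis DERIV_subset atLeastAtMost_iff atLeastatMost_subset_iff order_trans)

lemma has_real_derivative_reflect_Icc:
  fixes u u' :: "real \<Rightarrow> real"
  assumes "\<forall>r\<in>{a..b}. (u has_real_derivative u' r) (at r within {a..b})" "t \<in> {a..b}"
  shows "((\<lambda>t. u (a + b - t)) has_real_derivative - u' (a + b - t)) (at t within {a..b})"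
proof -
  have "(\<lambda>t. a + b - t) ` {a..b} = {a..b}"
    by (auto simp: image_iff intro!: bexI[of _ "a + b - _"])
  then have "(u has_real_derivative u' (a + b - t)) (at (a + b - t) within (\<lambda>t. a + b - t) ` {a..b})"
    using assms by simp
  moreover have "((\<lambda>t. a + b - t) has_real_derivative -1) (at t within {a..b})"
    by (auto intro!: derivative_eq_intros)
  ultimately show ?thesis
    using DERIV_image_chain by (fastforce simp: comp_def)
qed

lemma continuous_nonvanishing_sign_const:
  fixes u :: "real \<Rightarrow> real"
  assumes "continuous_on {a..b} u" "a \<le> b" "\<forall>t\<in>{a..b}. u t \<noteq> 0"
  shows "\<exists>\<sigma>\<in>{1, -1}. \<forall>t\<in>{a..b}. 0 < \<sigma> * u t"
proof (intro bexI ballI)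
  show "sgn (u a) \<in> {1, -1}"
    using assms(2,3) by (auto simp: sgn_real_def)
  fix t assume t: "t \<in> {a..b}"
  show "0 < sgn (u a) * u t"
  proof (rule ccontr)
    assume "\<not> 0 < sgn (u a) * u t"
    moreover have "continuous_on {a..t} (\<lambda>x. sgn (u a) * u x)"
      using t by (intro continuous_on_mult_left continuous_on_subset[OF assms(1)]) auto
    moreover have "0 \<le> sgn (u a) * u a"
      by (simp add: sgn_real_def)
    ultimately obtain x where "a \<le> x" "x \<le> t" "sgn (u a) * u x = 0"
      using IVT2'[of "\<lambda>x. sgn (u a) * u x" t 0 a] t by auto
    then show False
      using assms(2,3) t by (auto simp: sgn_real_def split: if_splits)
  qed
qed

lemma SUP_abs_less_imp_abs_less:
  fixes u :: "real \<Rightarrow> real"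
  assumes "continuous_on {a..b} u" "(SUP x\<in>{a..b}. \<bar>u x\<bar>) < e" "t \<in> {a..b}"
  shows "\<bar>u t\<bar> < e"
proof -
  have "bdd_above ((\<lambda>x. \<bar>u x\<bar>) ` {a..b})"
    by (intro bounded_imp_bdd_above compact_imp_bounded compact_continuous_image
        continuous_on_rabs assms(1) compact_Icc)
  then show ?thesis
    using cSUP_upper[OF assms(3)] assms(2) by fastforce
qed

lemma finite_set_misses_one_of_k_intervals:
  fixes Z :: "real set"
  assumes "finite Z" "card Z < k" "0 < \<delta>"
  shows "\<exists>j<k. {a + real j * \<delta> <..< a + real (Suc j) * \<delta>} \<inter> Z = {}"
proof (rule ccontr)
  assume "\<not> ?thesis"
  then have "\<forall>j<k. \<exists>x. x \<in> {a + real j * \<delta> <..< a + real (Suc j) * \<delta>} \<inter> Z"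
    by blast
  then obtain g where g: "\<forall>j<k. g j \<in> {a + real j * \<delta> <..< a + real (Suc j) * \<delta>} \<inter> Z"
    by metis
  have "g i < g j" if "i < j" "j < k" for i j
  proof -
    have "real (Suc i) * \<delta> \<le> real j * \<delta>"
      using that \<open>0 < \<delta>\<close> by (intro mult_right_mono) auto
    moreover have "g i < a + real (Suc i) * \<delta>" "a + real j * \<delta> < g j"
      using g that by auto
    ultimately show ?thesis
      by linarith
  qed
  then have "inj_on g {..<k}"
    by (intro strict_mono_on_imp_inj_on) (auto simp: strict_mono_on_def)
  moreover have "g ` {..<k} \<subseteq> Z"
    using g by auto
  ultimately have "k \<le> card Z"
    using card_inj_on_le[of g "{..<k}" Z] \<open>finite Z\<close> by simp
  then show False
    using \<open>card Z < k\<close> by simp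
qed

text \<open>The case n = 0 is covered by the junk value 1 / 0 = 0.\<close>

lemma reciprocals_below_bounded_away:
  assumes "0 < R"
  shows "\<exists>a0. 0 < a0 \<and> a0 < R \<and> (\<forall>n::nat. 1 / real n < R \<longrightarrow> 1 / real n < a0)"
proof -
  define P where "P n \<longleftrightarrow> 0 < n \<and> 1 / real n < R" for n :: nat
  have "\<exists>n. P n"
    using ex_inverse_of_nat_less[OF assms] by (auto simp: P_def inverse_eq_divide)
  define n0 where "n0 = (LEAST n. P n)"
  have "P n0"
    unfolding n0_def using \<open>\<exists>n. P n\<close> by (rule LeastI_ex)
  have "1 / real n \<le> 1 / real n0" if "1 / real n < R" for n :: nat
  proof (cases "n = 0")
    case False
    then have "n0 \<le> n"
      unfolding n0_def using that by (intro Least_le) (simp add: P_def)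
    then show ?thesis
      using \<open>P n0\<close> by (simp add: P_def frac_le)
  qed simp
  moreover have "0 < 1 / real n0" "1 / real n0 < R"
    using \<open>P n0\<close> by (simp_all add: P_def)
  ultimately obtain x where "0 < x" "x < R" "\<forall>n::nat. 1 / real n < R \<longrightarrow> 1 / real n \<le> x"
    by blast
  then show ?thesis
    by (intro exI[of _ "(x + R) / 2"]) force
qed

lemma phi1_minus: "phi1 (- s) = - phi1 s"
  unfolding phi1_def by simp

lemma phi1_mult_sign: "\<sigma> \<in> {1, -1} \<Longrightarrow> phi1 (\<sigma> * s) = \<sigma> * phi1 s"
  using phi1_minus[of s] by auto

lemma phi1_pos: "0 < s \<Longrightarrow> s < 1 \<Longrightarrow> 0 < phi1 s"
  unfolding phi1_def by (simp add: abs_square_less_1)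

lemma phi1_ge_self:
  assumes "0 \<le> s" "s < 1"
  shows "s \<le> phi1 s"
proof -
  have "0 < sqrt (1 - s\<^sup>2)" "sqrt (1 - s\<^sup>2) \<le> 1"
    using assms by (simp_all add: abs_square_less_1)
  then show ?thesis
    unfolding phi1_def using assms by (simp add: le_divide_eq mult_left_le)
qed

lemma phi1_le_2_self:
  assumes "0 \<le> s" "s \<le> 1/2"
  shows "phi1 s \<le> 2 * s"
proof -
  have "s\<^sup>2 \<le> (1/2)\<^sup>2"
    using assms by (intro power_mono) auto
  then have "(1/2)\<^sup>2 \<le> 1 - s\<^sup>2"
    by (simp add: power2_eq_square)
  then have h: "1/2 \<le> sqrt (1 - s\<^sup>2)"
    by (rule real_le_rsqrt)
  then have "s * 1 \<le> s * (2 * sqrt (1 - s\<^sup>2))"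
    using assms(1) by (intro mult_left_mono) auto
  then show ?thesis
    unfolding phi1_def using h
    by (subst pos_divide_le_eq) (linarith, simp add: algebra_simps)
qed

lemma phi1_ge_imp_ge:
  assumes "\<bar>s\<bar> < 1" "0 < K" "K \<le> phi1 s"
  shows "min K 1 / 2 \<le> s"
proof (cases "s \<le> 1/2")
  case True
  have "0 \<le> s"
    using assms phi1_pos[of "- s"] by (force simp: phi1_minus)
  then show ?thesis
    using phi1_le_2_self[OF _ True] assms(3) by linarith
qed simp

lemma phi1_le_imp_le:
  assumes "\<bar>s\<bar> < 1" "0 < K" "phi1 s \<le> - K"
  shows "s \<le> - min K 1 / 2"
  using phi1_ge_imp_ge[of "- s" K] assms by (simp add: phi1_minus)

lemma weighted_phi1_le_imp_le:
  assumes "\<bar>s\<bar> < 1" "0 < K" "0 < \<rho>" "\<rho> \<le> \<rho>max" "\<rho> * phi1 s \<le> - (\<rho>max * K)"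
  shows "s \<le> - min K 1 / 2"
proof (rule phi1_le_imp_le[OF assms(1,2)])
  have "\<rho> * K \<le> \<rho>max * K"
    using assms(2,4) by (simp add: mult_right_mono)
  then have "\<rho> * phi1 s \<le> \<rho> * - K"
    using assms(5) by simp
  then show "phi1 s \<le> - K"
    using assms(3) by (simp only: mult_le_cancel_left_pos)
qed

lemma flux_below_imp_fall:
  fixes u u' \<rho> :: "real \<Rightarrow> real"
  assumes der: "\<forall>r\<in>{a..b}. (u has_real_derivative u' r) (at r within {a..b})"
    and "a \<le> x" "x \<le> y" "y \<le> b" "0 < K"
    and flux: "\<forall>r\<in>{x..y}. 0 < \<rho> r \<and> \<rho> r \<le> \<rho>max \<and> \<bar>u' r\<bar> < 1 \<and> \<rho> r * phi1 (u' r) \<le> - (\<rho>max * K)"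
  shows "u y + min K 1 / 2 * (y - x) \<le> u x"
proof -
  have "u y - u x \<le> - min K 1 / 2 * (y - x)"
  proof (rule derivative_le_imp_diff_le[OF \<open>x \<le> y\<close> _ der])
    show "{x..y} \<subseteq> {a..b}"
      using assms(2,4) by auto
    show "\<forall>r\<in>{x..y}. u' r \<le> - min K 1 / 2"
      using weighted_phi1_le_imp_le[OF _ \<open>0 < K\<close>] flux by blast
  qed
  then show ?thesis
    by simp
qed

text \<open>An integrated form of w' \<le> - L v: over any interval, w drops by at least L times the
  length times any lower bound of v there.\<close>

definition descends_at_rate :: "real \<Rightarrow> (real \<Rightarrow> real) \<Rightarrow> (real \<Rightarrow> real) \<Rightarrow> real \<Rightarrow> real \<Rightarrow> bool" where
  "descends_at_rate L v w a b \<longleftrightarrow>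
     (\<forall>x y c. a \<le> x \<longrightarrow> x \<le> y \<longrightarrow> y \<le> b \<longrightarrow> (\<forall>t\<in>{x..y}. c \<le> v t) \<longrightarrow>
        w y \<le> w x - L * (y - x) * c)"

lemma descends_at_rate_subinterval:
  "descends_at_rate L v w a b \<Longrightarrow> a \<le> a' \<Longrightarrow> b' \<le> b \<Longrightarrow> descends_at_rate L v w a' b'"
  unfolding descends_at_rate_def by fastforce

lemma descends_at_rate_antimono:
  "descends_at_rate L v w a b \<Longrightarrow> \<forall>t\<in>{a..b}. 0 \<le> v t \<Longrightarrow> a \<le> x \<Longrightarrow> x \<le> y \<Longrightarrow> y \<le> b \<Longrightarrow>
    w y \<le> w x"
  unfolding descends_at_rate_def by (fastforce dest: spec[of _ 0])

lemma descends_at_rate_reflect: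
  assumes "descends_at_rate L v w a b"
  shows "descends_at_rate L (\<lambda>t. v (a + b - t)) (\<lambda>t. - w (a + b - t)) a b"
  unfolding descends_at_rate_def
proof (intro allI impI)
  fix x y c
  assume "a \<le> x" "x \<le> y" "y \<le> b" and "\<forall>t\<in>{x..y}. c \<le> v (a + b - t)"
  then have "\<forall>t\<in>{a + b - y..a + b - x}. c \<le> v t"
    by (auto dest!: bspec[of _ _ "a + b - _"])
  then show "- w (a + b - y) \<le> - w (a + b - x) - L * (y - x) * c"
    using assms[unfolded descends_at_rate_def, rule_format, of "a + b - y" "a + b - x" c]
      \<open>a \<le> x\<close> \<open>x \<le> y\<close> \<open>y \<le> b\<close> by simp
qed

lemma integral_descends_at_rate:
  fixes h v w :: "real \<Rightarrow> real"
  assumes "h integrable_on {0..R}" "0 \<le> a" "b \<le> R" "0 \<le> lam" "0 \<le> K"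
    and lower: "\<forall>t\<in>{a..b}. K * v t \<le> \<sigma> * h t"
    and w: "\<forall>r\<in>{a..b}. w r = - lam * \<sigma> * integral {0..r} h"
  shows "descends_at_rate (lam * K) v w a b"
  unfolding descends_at_rate_def
proof (intro allI impI)
  fix x y c
  assume "a \<le> x" "x \<le> y" "y \<le> b" and c: "\<forall>t\<in>{x..y}. c \<le> v t"
  have "h integrable_on {0..y}"
    using integrable_on_subinterval[OF assms(1)] assms \<open>a \<le> x\<close> \<open>x \<le> y\<close> \<open>y \<le> b\<close> by auto
  then have split: "integral {0..y} h = integral {0..x} h + integral {x..y} h"
    using Henstock_Kurzweil_Integration.integral_combine[of 0 x y h] assms \<open>a \<le> x\<close> \<open>x \<le> y\<close>
    by simp
  have "h integrable_on {x..y}"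
    using integrable_on_subinterval[OF assms(1)] assms \<open>a \<le> x\<close> \<open>x \<le> y\<close> \<open>y \<le> b\<close> by auto
  moreover have "K * c \<le> \<sigma> * h t" if "t \<in> {x..y}" for t
    using c lower \<open>0 \<le> K\<close> that \<open>a \<le> x\<close> \<open>y \<le> b\<close>
    by (meson atLeastAtMost_iff mult_left_mono order_trans)
  ultimately have "integral {x..y} (\<lambda>_. K * c) \<le> integral {x..y} (\<lambda>t. \<sigma> * h t)"
    by (intro integral_le integrable_on_mult_right integrable_const_ivl)
  then have "(y - x) * (K * c) \<le> \<sigma> * integral {x..y} h"
    using \<open>x \<le> y\<close> by (simp add: ac_simps)
  have "w y = w x - lam * (\<sigma> * integral {x..y} h)"
    using w split \<open>a \<le> x\<close> \<open>x \<le> y\<close> \<open>y \<le> b\<close> by (simp add: algebra_simps)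
  also have "\<dots> \<le> w x - lam * ((y - x) * (K * c))"
    using \<open>(y - x) * (K * c) \<le> _\<close> \<open>0 \<le> lam\<close> by (simp add: mult_left_mono)
  finally show "w y \<le> w x - lam * K * (y - x) * c"
    by (simp add: algebra_simps)
qed

lemma fall_exceeds_height:
  fixes c l K L \<rho> :: real
  assumes "0 < c" "0 < \<rho>" "c < l / 2" "2 * \<rho> < L * l\<^sup>2" "K = L * l * c / \<rho>"
  shows "c \<le> min K 1 / 2 * l"
proof (cases "1 \<le> K")
  case False
  have "c * 1 \<le> c * (L * l\<^sup>2 / (2 * \<rho>))"
    using assms(1,2,4) by (intro mult_left_mono) simp_all
  also have "\<dots> = K / 2 * l"
    using assms(2,5) by (simp add: power2_eq_square ac_simps)
  finally show ?thesis
    using False by simp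
qed (use assms(3) in simp)

lemma descent_from_nonpositive_start_antimono:
  fixes u u' \<rho> :: "real \<Rightarrow> real"
  assumes der: "\<forall>r\<in>{a..b}. (u has_real_derivative u' r) (at r within {a..b})"
    and \<rho>: "\<forall>r\<in>{a..b}. 0 < \<rho> r"
    and u'_lt: "\<forall>r\<in>{a..b}. \<bar>u' r\<bar> < 1"
    and u_nonneg: "\<forall>r\<in>{a..b}. 0 \<le> u r"
    and descent: "descends_at_rate L u (\<lambda>r. \<rho> r * phi1 (u' r)) a b"
    and start: "\<rho> a * phi1 (u' a) \<le> 0"
    and "a \<le> x" "x \<le> y" "y \<le> b"
  shows "u y \<le> u x"
proof -
  have "u' r \<le> 0" if "r \<in> {x..y}" for r
  proof (rule ccontr)
    assume "\<not> u' r \<le> 0"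
    then have "0 < \<rho> r * phi1 (u' r)"
      using phi1_pos \<rho> u'_lt that assms(7-9) by (simp add: abs_less_iff)
    then show False
      using descends_at_rate_antimono[OF descent u_nonneg, of a r] start that assms(7-9) by simp
  qed
  then show ?thesis
    using derivative_le_imp_diff_le[OF _ _ der, of x y 0] assms(7-9) by auto
qed

lemma descent_from_nonpositive_start_impossible:
  fixes u u' \<rho> :: "real \<Rightarrow> real"
  assumes "a < b"
    and der: "\<forall>r\<in>{a..b}. (u has_real_derivative u' r) (at r within {a..b})"
    and \<rho>: "\<forall>r\<in>{a..b}. 0 < \<rho> r \<and> \<rho> r \<le> \<rho>max"
    and u'_lt: "\<forall>r\<in>{a..b}. \<bar>u' r\<bar> < 1"
    and u_pos: "\<forall>r\<in>{a..b}. 0 < u r \<and> u r < m"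
    and descent: "descends_at_rate L u (\<lambda>r. \<rho> r * phi1 (u' r)) a b"
    and start: "\<rho> a * phi1 (u' a) \<le> 0"
    and m: "m \<le> (b - a) / 4" and L: "8 * \<rho>max < L * (b - a)\<^sup>2"
  shows False
proof -
  have "0 < \<rho>max"
    using \<rho> \<open>a < b\<close> by force
  then have "0 < L"
    using L by (smt (verit) zero_le_power2 mult_nonpos_nonneg)
  have u_nonneg: "\<forall>r\<in>{a..b}. 0 \<le> u r"
    using u_pos by (simp add: less_imp_le)
  define q where "q = (a + b) / 2"
  have q: "a < q" "q < b" "q - a = (b - a) / 2" "b - q = (b - a) / 2"
    using \<open>a < b\<close> by (simp_all add: q_def field_simps)
  define c where "c = u q"
  have c: "0 < c" "c < m"
    using u_pos q by (simp_all add: c_def)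
  \<comment> \<open>u is antitone, so the left half pushes the midpoint flux below - \<rho>max K; on the right
    half it stays there, forcing u to fall at slope min K 1 / 2, by more than its height c\<close>
  define K where "K = L * (q - a) * c / \<rho>max"
  have "0 < K"
    using \<open>0 < L\<close> \<open>0 < \<rho>max\<close> q c by (simp add: K_def)
  have "\<forall>r\<in>{a..b}. 0 < \<rho> r"
    using \<rho> by blast
  then have "\<forall>t\<in>{a..q}. c \<le> u t"
    using descent_from_nonpositive_start_antimono[OF der _ u'_lt u_nonneg descent start] q(2)
    unfolding c_def by auto
  then have "\<rho> q * phi1 (u' q) \<le> \<rho> a * phi1 (u' a) - L * (q - a) * c"
    using descent[unfolded descends_at_rate_def, rule_format, of a q c] q(1,2) by simp
  then have flux_q: "\<rho> q * phi1 (u' q) \<le> - (\<rho>max * K)"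
    using start \<open>0 < \<rho>max\<close> by (simp add: K_def)
  have "\<forall>r\<in>{q..b}. 0 < \<rho> r \<and> \<rho> r \<le> \<rho>max \<and> \<bar>u' r\<bar> < 1 \<and> \<rho> r * phi1 (u' r) \<le> - (\<rho>max * K)"
    using \<rho> u'_lt descends_at_rate_antimono[OF descent u_nonneg, of q] flux_q q by fastforce
  then have "u b + min K 1 / 2 * (b - q) \<le> c"
    unfolding c_def
    by (rule flux_below_imp_fall[OF der less_imp_le[OF q(1)] less_imp_le[OF q(2)] order_refl \<open>0 < K\<close>])
  moreover have "0 < u b"
    using u_pos \<open>a < b\<close> by simp
  moreover have "c \<le> min K 1 / 2 * (b - q)"
  proof (rule fall_exceeds_height[OF c(1) \<open>0 < \<rho>max\<close>])
    show "c < (b - q) / 2" "K = L * (b - q) * c / \<rho>max"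
      using c m q by (simp_all add: K_def)
    have "L * (b - a)\<^sup>2 = 4 * (L * (b - q)\<^sup>2)"
      unfolding q(4) by (simp add: power2_eq_square)
    then show "2 * \<rho>max < L * (b - q)\<^sup>2"
      using L by linarith
  qed
  ultimately show False
    by linarith
qed

text \<open>The reflection t \<mapsto> a + b - t reduces this to the previous lemma.\<close>

lemma descent_to_nonnegative_end_impossible:
  fixes u u' \<rho> :: "real \<Rightarrow> real"
  assumes "a < b"
    and der: "\<forall>r\<in>{a..b}. (u has_real_derivative u' r) (at r within {a..b})"
    and \<rho>: "\<forall>r\<in>{a..b}. 0 < \<rho> r \<and> \<rho> r \<le> \<rho>max"
    and u'_lt: "\<forall>r\<in>{a..b}. \<bar>u' r\<bar> < 1"
    and u_pos: "\<forall>r\<in>{a..b}. 0 < u r \<and> u r < m"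
    and descent: "descends_at_rate L u (\<lambda>r. \<rho> r * phi1 (u' r)) a b"
    and final: "0 \<le> \<rho> b * phi1 (u' b)"
    and m: "m \<le> (b - a) / 4" and L: "8 * \<rho>max < L * (b - a)\<^sup>2"
  shows False
proof (rule descent_from_nonpositive_start_impossible[OF \<open>a < b\<close>])
  show "\<forall>t\<in>{a..b}. ((\<lambda>t. u (a + b - t)) has_real_derivative - u' (a + b - t)) (at t within {a..b})"
    using has_real_derivative_reflect_Icc[OF der] by blast
  show "descends_at_rate L (\<lambda>t. u (a + b - t)) (\<lambda>t. \<rho> (a + b - t) * phi1 (- u' (a + b - t))) a b"
    using descends_at_rate_reflect[OF descent] by (simp add: phi1_minus)
qed (use \<rho> u'_lt u_pos final m L in \<open>auto simp: phi1_minus\<close>)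

lemma positive_descent_impossible:
  fixes u u' \<rho> :: "real \<Rightarrow> real"
  assumes "a < b"
    and der: "\<forall>r\<in>{a..b}. (u has_real_derivative u' r) (at r within {a..b})"
    and \<rho>: "\<forall>r\<in>{a..b}. 0 < \<rho> r \<and> \<rho> r \<le> \<rho>max"
    and u'_lt: "\<forall>r\<in>{a..b}. \<bar>u' r\<bar> < 1"
    and u_pos: "\<forall>r\<in>{a..b}. 0 < u r \<and> u r < m"
    and descent: "descends_at_rate L u (\<lambda>r. \<rho> r * phi1 (u' r)) a b"
    and m: "m \<le> (b - a) / 8" and L: "32 * \<rho>max < L * (b - a)\<^sup>2"
  shows False
proof -
  define q where "q = (a + b) / 2"
  have q: "a < q" "q < b" "q - a = (b - a) / 2" "b - q = (b - a) / 2"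
    using \<open>a < b\<close> by (simp_all add: q_def field_simps)
  have "L * (b - a)\<^sup>2 = 4 * (L * ((b - a) / 2)\<^sup>2)"
    by (simp add: power2_eq_square)
  then have m': "m \<le> (b - q) / 4" "m \<le> (q - a) / 4"
    and L': "8 * \<rho>max < L * (b - q)\<^sup>2" "8 * \<rho>max < L * (q - a)\<^sup>2"
    unfolding q(3,4) using m L by linarith+
  show False
  proof (cases "\<rho> q * phi1 (u' q) \<le> 0")
    case True
    show False
      by (rule descent_from_nonpositive_start_impossible[where \<rho>max = \<rho>max and m = m, OF \<open>q < b\<close>
            has_real_derivative_on_subinterval[OF der] _ _ _
            descends_at_rate_subinterval[OF descent] True])
        (use q \<rho> u'_lt u_pos m' L' in simp_all)
  next
    case False
    show False
      by (rule descent_to_nonnegative_end_impossible[where \<rho>max = \<rho>max and m = m, OF \<open>a < q\<close>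
            has_real_derivative_on_subinterval[OF der] _ _ _
            descends_at_rate_subinterval[OF descent]])
        (use q \<rho> u'_lt u_pos m' L' False in simp_all)
  qed
qed

lemma A3_0_linear_lower_bound:
  assumes "A3_0 R f" "0 \<le> M"
  shows "\<exists>e>0. \<forall>r\<in>{0..R}. \<forall>s. \<bar>s\<bar> < e \<longrightarrow> M * \<bar>s\<bar> \<le> sgn s * f r s"
proof -
  obtain e where "e > 0" and e: "\<forall>r\<in>{0..R}. \<forall>s. 0 < \<bar>s\<bar> \<and> \<bar>s\<bar> < e \<longrightarrow> M \<le> f r s / phi1 s"
    using \<open>A3_0 R f\<close> unfolding A3_0_def by blast
  have "M * \<bar>s\<bar> \<le> sgn s * f r s" if "r \<in> {0..R}" "\<bar>s\<bar> < min e 1" for r s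
  proof (cases s "0::real" rule: linorder_cases)
    case equal
    then show ?thesis
      using \<open>A3_0 R f\<close> that by (simp add: A3_0_def)
  next
    case greater
    then have "0 < phi1 s" "s \<le> phi1 s" "M \<le> f r s / phi1 s"
      using phi1_pos phi1_ge_self e that by auto
    then have "M * s \<le> M * phi1 s" "M * phi1 s \<le> f r s"
      using \<open>0 \<le> M\<close> by (simp_all add: mult_left_mono pos_le_divide_eq)
    then show ?thesis
      using greater by simp
  next
    case less
    then have "phi1 s < 0" "phi1 s \<le> s" "M \<le> f r s / phi1 s"
      using phi1_pos[of "- s"] phi1_ge_self[of "- s"] e that by (auto simp: phi1_minus)
    then have "f r s \<le> M * s"
      using \<open>0 \<le> M\<close> by (smt (verit) mult_left_mono neg_le_divide_eq)
    then show ?thesis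
      using less by simp
  qed
  then show ?thesis
    using \<open>e > 0\<close> by (intro exI[of _ "min e 1"]) auto
qed

lemma gn_composition_integrable:
  assumes "A1 R alpha f" "continuous_on {0..R} u" "\<forall>t\<in>{0..R}. ereal \<bar>u t\<bar> < alpha"
    and "1 / real n \<le> R"
  shows "(\<lambda>t. t ^ m * gn f n t (u t)) integrable_on {0..R}"
proof -
  define d where "d = 1 / real n"
  have "0 \<le> d" "d \<le> R"
    using assms(4) by (simp_all add: d_def)
  have "continuous_on {d..R} (\<lambda>t. (t - d, u t))"
    using \<open>0 \<le> d\<close> by (intro continuous_intros continuous_on_subset[OF assms(2)]) auto
  moreover have "(\<lambda>t. (t - d, u t)) ` {d..R} \<subseteq> {0..R} \<times> {s. ereal \<bar>s\<bar> < alpha}"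
    using assms(3) \<open>0 \<le> d\<close> by auto
  moreover have "continuous_on ({0..R} \<times> {s. ereal \<bar>s\<bar> < alpha}) (\<lambda>(r, s). f r s)"
    using assms(1) unfolding A1_def by blast
  ultimately have "continuous_on {d..R} (\<lambda>t. (\<lambda>(r, s). f r s) (t - d, u t))"
    by (rule continuous_on_compose2[rotated])
  then have "continuous_on {d..R} (\<lambda>t. t ^ m * f (t - d) (u t))"
    by (intro continuous_intros) simp
  then have "(\<lambda>t. t ^ m * f (t - d) (u t)) integrable_on {d..R}"
    by (rule integrable_continuous_real)
  then have "(\<lambda>t. t ^ m * gn f n t (u t)) integrable_on {d..R}"
    by (rule integrable_spike_finite[of "{d}", rotated 2]) (auto simp: gn_def d_def)
  moreover have "((\<lambda>t. t ^ m * gn f n t (u t)) has_integral 0) {0..d}"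
    using has_integral_0[of "{0..d}"] by (rule has_integral_eq[rotated]) (simp add: gn_def d_def)
  ultimately show ?thesis
    using Henstock_Kurzweil_Integration.integrable_combine[OF \<open>0 \<le> d\<close> \<open>d \<le> R\<close>] by blast
qed

lemma weighted_gn_lower_bound:
  assumes f_lower: "\<forall>r\<in>{0..R}. \<forall>s. \<bar>s\<bar> < \<epsilon> \<longrightarrow> M * \<bar>s\<bar> \<le> sgn s * f r s" and "0 \<le> M"
    and "1 / real n < a" "a \<le> t" "t \<le> R" "\<bar>x\<bar> < \<epsilon>"
  shows "a ^ m * M * \<bar>x\<bar> \<le> sgn x * (t ^ m * gn f n t x)"
proof -
  have "0 \<le> 1 / real n"
    by simp
  then have "0 < a" "0 \<le> t - 1 / real n" "t - 1 / real n \<le> R"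
    using assms(3-5) by linarith+
  then have "t - 1 / real n \<in> {0..R}"
    by simp
  then have "M * \<bar>x\<bar> \<le> sgn x * f (t - 1 / real n) x"
    using f_lower \<open>\<bar>x\<bar> < \<epsilon>\<close> by blast
  have "a ^ m * M * \<bar>x\<bar> \<le> t ^ m * (M * \<bar>x\<bar>)"
    using assms(2,4) \<open>0 < a\<close> unfolding mult.assoc by (intro mult_right_mono power_mono) auto
  also have "\<dots> \<le> t ^ m * (sgn x * f (t - 1 / real n) x)"
    using \<open>M * \<bar>x\<bar> \<le> _\<close> assms(4) \<open>0 < a\<close> by (intro mult_left_mono) auto
  also have "\<dots> = sgn x * (t ^ m * gn f n t x)"
    using assms(3,4) by (simp add: gn_def)
  finally show ?thesis .
qed

lemma sol46_continuous: "sol46 N R f n lam u u' \<Longrightarrow> continuous_on {0..R} u"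
  unfolding sol46_def C1_with_def by (auto intro: DERIV_continuous_on)

lemma sol46_signed_flux:
  assumes "sol46 N R f n lam u u'" "\<sigma> \<in> {1, -1}" "r \<in> {0..R}"
  shows "r ^ (N - 1) * phi1 (\<sigma> * u' r)
    = - lam * \<sigma> * integral {0..r} (\<lambda>t. t ^ (N - 1) * gn f n t (u t))"
proof -
  have "r ^ (N - 1) * phi1 (\<sigma> * u' r) = \<sigma> * (r ^ (N - 1) * phi1 (u' r))"
    using assms(2) by (simp add: phi1_mult_sign algebra_simps)
  also have "\<dots> = \<sigma> * (- lam * integral {0..r} (\<lambda>t. t ^ (N - 1) * gn f n t (u t)))"
    using assms(1,3) unfolding sol46_def by simp
  finally show ?thesis
    by simp
qed

lemma S_nu_zero_free_subinterval:
  assumes "S_nu R k nu u u'" "1 \<le> k" "0 \<le> a0" "a0 < R"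
  shows "\<exists>a b. a0 \<le> a \<and> b \<le> R \<and> b - a = (R - a0) / (2 * real k) \<and> (\<forall>t\<in>{a..b}. u t \<noteq> 0)"
proof -
  define Z where "Z = {x\<in>{0<..<R}. nu * u x = 0}"
  define \<delta> where "\<delta> = (R - a0) / real k"
  have "finite Z" "card Z < k" "0 < \<delta>"
    using assms unfolding S_nu_def S_plus_def Z_def \<delta>_def by auto
  then obtain j where "j < k" and j: "{a0 + real j * \<delta> <..< a0 + real (Suc j) * \<delta>} \<inter> Z = {}"
    using finite_set_misses_one_of_k_intervals by blast
  define a where "a = a0 + real j * \<delta> + \<delta> / 4"
  have "real (Suc j) * \<delta> \<le> real k * \<delta>"
    using \<open>j < k\<close> \<open>0 < \<delta>\<close> by (intro mult_right_mono) auto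
  moreover have "real k * \<delta> = R - a0"
    using \<open>1 \<le> k\<close> by (simp add: \<delta>_def)
  ultimately have "real j * \<delta> + \<delta> \<le> R - a0"
    by (simp add: algebra_simps)
  then have "a + \<delta> / 2 < R"
    using \<open>0 < \<delta>\<close> unfolding a_def by linarith
  moreover have "u t \<noteq> 0" if "t \<in> {a..a + \<delta> / 2}" for t
  proof -
    have t_in: "t \<in> {a0 + real j * \<delta> <..< a0 + real (Suc j) * \<delta>}"
      using that \<open>0 < \<delta>\<close> by (auto simp: a_def algebra_simps)
    have "0 \<le> real j * \<delta>"
      using \<open>0 < \<delta>\<close> by simp
    then have "0 < t"
      using that \<open>0 < \<delta>\<close> \<open>0 \<le> a0\<close> unfolding a_def atLeastAtMost_iff by linarith
    then show ?thesis
      using j t_in that \<open>a + \<delta> / 2 < R\<close> unfolding Z_def by auto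
  qed
  moreover have "a0 \<le> a"
    using \<open>0 < \<delta>\<close> by (simp add: a_def)
  ultimately show ?thesis
    by (intro exI[of _ a] exI[of _ "a + \<delta> / 2"]) (auto simp: \<delta>_def)
qed

lemma sol46_not_small_on_zero_free_interval:
  fixes u u' :: "real \<Rightarrow> real"
  assumes sol: "sol46 N R f n lam u u'" and "A1 R alpha f" and "0 < lam"
    and ab: "1 / real n < a" "a < b" "b \<le> R"
    and nonzero: "\<forall>t\<in>{a..b}. u t \<noteq> 0"
    and f_lower: "\<forall>r\<in>{0..R}. \<forall>s. \<bar>s\<bar> < \<epsilon> \<longrightarrow> M * \<bar>s\<bar> \<le> sgn s * f r s" and "0 \<le> M"
    and small: "\<forall>t\<in>{0..R}. \<bar>u t\<bar> < \<epsilon>" and "\<epsilon> \<le> R" and "\<epsilon> \<le> (b - a) / 8"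
    and L: "32 * b ^ (N - 1) < lam * a ^ (N - 1) * M * (b - a)\<^sup>2"
  shows False
proof -
  define h where "h t = t ^ (N - 1) * gn f n t (u t)" for t
  have "0 \<le> 1 / real n"
    by simp
  then have "0 < a"
    using ab(1) by linarith
  then have sub: "{a..b} \<subseteq> {0..R}"
    using ab by auto
  obtain \<sigma> :: real where \<sigma>: "\<sigma> \<in> {1, -1}" "\<forall>t\<in>{a..b}. 0 < \<sigma> * u t"
    using continuous_nonvanishing_sign_const[OF continuous_on_subset[OF sol46_continuous[OF sol] sub]]
      ab nonzero by (meson less_imp_le)
  have v: "\<sigma> = sgn (u t)" "\<sigma> * u t = \<bar>u t\<bar>" if "t \<in> {a..b}" for t
    using \<sigma>(1) \<sigma>(2)[rule_format, OF that] by (auto simp: sgn_real_def abs_real_def)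
  have "ereal \<bar>u t\<bar> < alpha" if "t \<in> {0..R}" for t
  proof -
    have "ereal \<bar>u t\<bar> < ereal R"
      using small that \<open>\<epsilon> \<le> R\<close> by fastforce
    then show ?thesis
      using \<open>A1 R alpha f\<close> unfolding A1_def by (blast intro: less_trans)
  qed
  then have "h integrable_on {0..R}"
    unfolding h_def using ab gn_composition_integrable[OF \<open>A1 R alpha f\<close> sol46_continuous[OF sol]]
    by auto
  moreover have "a ^ (N - 1) * M * (\<sigma> * u t) \<le> \<sigma> * h t" if "t \<in> {a..b}" for t
    using weighted_gn_lower_bound[OF f_lower \<open>0 \<le> M\<close> ab(1)] that v[OF that] small sub
    unfolding h_def by auto
  ultimately have descent: "descends_at_rate (lam * (a ^ (N - 1) * M)) (\<lambda>t. \<sigma> * u t)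
      (\<lambda>r. r ^ (N - 1) * phi1 (\<sigma> * u' r)) a b"
    using \<open>0 < a\<close> ab \<open>0 < lam\<close> \<open>0 \<le> M\<close> sol46_signed_flux[OF sol \<sigma>(1)] sub
    unfolding h_def by (intro integral_descends_at_rate[where \<sigma> = \<sigma>]) auto
  have "\<forall>r\<in>{a..b}. ((\<lambda>t. \<sigma> * u t) has_real_derivative \<sigma> * u' r) (at r within {a..b})"
    using has_real_derivative_on_subinterval[of 0 R u u'] sol sub
    by (auto intro: DERIV_cmult simp: sol46_def C1_with_def)
  moreover have "\<forall>r\<in>{a..b}. 0 < r ^ (N - 1) \<and> r ^ (N - 1) \<le> b ^ (N - 1)"
    using \<open>0 < a\<close> by (auto intro: power_mono)
  moreover have "\<forall>r\<in>{a..b}. \<bar>\<sigma> * u' r\<bar> < 1"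
    using sol sub \<sigma>(1) by (auto simp: abs_mult sol46_def)
  moreover have "\<forall>r\<in>{a..b}. 0 < \<sigma> * u r \<and> \<sigma> * u r < \<epsilon>"
    using \<sigma>(2) v small sub by auto
  moreover have "32 * b ^ (N - 1) < lam * (a ^ (N - 1) * M) * (b - a)\<^sup>2"
    using L by (simp add: mult.assoc)
  ultimately show False
    using positive_descent_impossible[OF \<open>a < b\<close> _ _ _ _ descent \<open>\<epsilon> \<le> (b - a) / 8\<close>] by blast
qed

lemma sol46_S_nu_not_small:
  fixes u u' :: "real \<Rightarrow> real"
  assumes sol: "sol46 N R f n lam u u'" and "S_nu R k nu u u'" and "A1 R alpha f"
    and "0 < lam" "1 \<le> k" and a0: "1 / real n < a0" "a0 < R"
    and f_lower: "\<forall>r\<in>{0..R}. \<forall>s. \<bar>s\<bar> < \<epsilon> \<longrightarrow> M * \<bar>s\<bar> \<le> sgn s * f r s" and "0 \<le> M"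
    and M: "32 * R ^ (N - 1) < M * (lam * a0 ^ (N - 1) * ((R - a0) / (2 * real k))\<^sup>2)"
    and small: "\<forall>t\<in>{0..R}. \<bar>u t\<bar> < \<epsilon>" and "\<epsilon> \<le> R" and "\<epsilon> \<le> (R - a0) / (2 * real k) / 8"
  shows False
proof -
  have "0 \<le> 1 / real n"
    by simp
  then have "0 < a0"
    using a0 by linarith
  then obtain a b where ab: "a0 \<le> a" "b \<le> R" "b - a = (R - a0) / (2 * real k)"
    and nonzero: "\<forall>t\<in>{a..b}. u t \<noteq> 0"
    using S_nu_zero_free_subinterval[OF \<open>S_nu R k nu u u'\<close> \<open>1 \<le> k\<close> less_imp_le \<open>a0 < R\<close>] by blast
  have "0 < b - a"
    using ab a0 \<open>1 \<le> k\<close> by simp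
  have "32 * b ^ (N - 1) \<le> 32 * R ^ (N - 1)"
    using ab \<open>0 < a0\<close> \<open>0 < b - a\<close> by (auto intro: power_mono)
  also have "\<dots> < lam * a0 ^ (N - 1) * M * (b - a)\<^sup>2"
    using M ab(3) by (simp add: algebra_simps)
  also have "\<dots> \<le> lam * a ^ (N - 1) * M * (b - a)\<^sup>2"
    using ab \<open>0 < a0\<close> \<open>0 < lam\<close> \<open>0 \<le> M\<close>
    by (intro mult_right_mono mult_left_mono power_mono) auto
  finally have L: "32 * b ^ (N - 1) < lam * a ^ (N - 1) * M * (b - a)\<^sup>2" .
  have "1 / real n < a" "a < b" "\<epsilon> \<le> (b - a) / 8"
    using a0 ab \<open>0 < b - a\<close> \<open>\<epsilon> \<le> (R - a0) / (2 * real k) / 8\<close> by auto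
  then show False
    using sol46_not_small_on_zero_free_interval[OF sol \<open>A1 R alpha f\<close> \<open>0 < lam\<close> _ _ \<open>b \<le> R\<close>
        nonzero f_lower \<open>0 \<le> M\<close> small \<open>\<epsilon> \<le> R\<close> _ L] by blast
qed

theorem lemma4p2:
  fixes N :: nat and R :: real and alpha :: ereal and f :: "real \<Rightarrow> real \<Rightarrow> real"
    and k :: nat and nu :: real and lam :: real
  assumes "N \<ge> 2" and "R > 0"
    and "A1 R alpha f" and "A3_0 R f"
    and "k \<ge> 1" and "nu \<in> {1, -1}" and "lam > 0"
  shows "\<exists>b>0. \<forall>n u u'. n \<ge> 1 \<and> 1 / real n < R \<and> sol46 N R f n lam u u' \<and> S_nu R k nu u u'
            \<longrightarrow> (SUP x\<in>{0..R}. \<bar>u x\<bar>) \<ge> b"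
proof -
  obtain a0 where a0: "0 < a0" "a0 < R" "\<forall>n::nat. 1 / real n < R \<longrightarrow> 1 / real n < a0"
    using reciprocals_below_bounded_away[OF \<open>R > 0\<close>] by blast
  define d where "d = (R - a0) / (2 * real k)"
  have "0 < d" "0 < lam * a0 ^ (N - 1) * d\<^sup>2"
    using a0 \<open>k \<ge> 1\<close> \<open>lam > 0\<close> by (simp_all add: d_def)
  then obtain m :: nat where m: "32 * R ^ (N - 1) < real m * (lam * a0 ^ (N - 1) * d\<^sup>2)"
    using ex_less_of_nat_mult by blast
  obtain e where "0 < e" and e: "\<forall>r\<in>{0..R}. \<forall>s. \<bar>s\<bar> < e \<longrightarrow> real m * \<bar>s\<bar> \<le> sgn s * f r s"
    using A3_0_linear_lower_bound[OF \<open>A3_0 R f\<close> of_nat_0_le_iff] by blast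
  define \<epsilon> where "\<epsilon> = min (min e R) (d / 8)"
  have "0 < \<epsilon>" "\<epsilon> \<le> R" "\<epsilon> \<le> d / 8"
    using \<open>0 < e\<close> \<open>R > 0\<close> \<open>0 < d\<close> by (simp_all add: \<epsilon>_def)
  have f_lower: "\<forall>r\<in>{0..R}. \<forall>s. \<bar>s\<bar> < \<epsilon> \<longrightarrow> real m * \<bar>s\<bar> \<le> sgn s * f r s"
    using e by (simp add: \<epsilon>_def)
  show ?thesis
  proof (intro exI[of _ \<epsilon>] conjI allI impI \<open>0 < \<epsilon>\<close>)
    fix n u u'
    assume "n \<ge> 1 \<and> 1 / real n < R \<and> sol46 N R f n lam u u' \<and> S_nu R k nu u u'"
    then have n: "1 / real n < a0" and sol: "sol46 N R f n lam u u'" and S: "S_nu R k nu u u'"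
      using a0(3) by blast+
    show "\<epsilon> \<le> (SUP x\<in>{0..R}. \<bar>u x\<bar>)"
    proof (rule ccontr)
      assume "\<not> ?thesis"
      then have "\<forall>t\<in>{0..R}. \<bar>u t\<bar> < \<epsilon>"
        using SUP_abs_less_imp_abs_less[OF sol46_continuous[OF sol]] by force
      then show False
        using sol46_S_nu_not_small[OF sol S \<open>A1 R alpha f\<close> \<open>lam > 0\<close> \<open>k \<ge> 1\<close> n \<open>a0 < R\<close> f_lower
            of_nat_0_le_iff m[unfolded d_def]] \<open>\<epsilon> \<le> R\<close> \<open>\<epsilon> \<le> d / 8\<close> by (simp add: d_def)
    qed
  qed
qed

end
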